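(* For almost every 2-agent zero-sum game (payoff matrix $A=A^{(12)}$, $A^{(21)}=-A^\top$) that has a unique Nash equilibrium and this equilibrium lies on the relative boundary of $\mathcal{X}$, there exists $\eta_0>0$ such that for every learning rate $\eta<\eta_0$ (used by both agents), when both agents update with Stochastic MWU, the strategy profile $X^t$ converges to the relative boundary of $\mathcal{X}$ (i.e., to the set of profiles in which some agent plays some pure strategy with probability $0$) with probability $1$.
   Context: Two agents with finite pure strategy sets $\mathcal{S}_1,\mathcal{S}_2$ and simplices of mixed strategies $\mathcal{X}_i=\{x_i\ge 0:\sum_{s_i}x_{is_i}=1\}$, $\mathcal{X}=\mathcal{X}_1\times\mathcal{X}_2$. Agent 1's expected payoff is $\langle x_1,Ax_2\rangle$ and agent 2's is $\langle x_2,-A^\top x_1\rangle$; write $A^{(12)}=A$, $A^{(21)}=-A^\top$. A Nash equilibrium is $x^*$ with $\langle x_i^*,A^{(ij)}x_j^*\rangle\ge\langle x_i,A^{(ij)}x_j^*\rangle$ for all $x_i\in\mathcal{X}_i$, $i\ne j$. "Almost every" refers to Lebesgue measure on payoff matrices. Stochastic MWU with learning rate $\eta$: given $X^t$, each agent $j$ independently samples a pure strategy $s_j$ with probability $X^t_{js_j}$, and then for each agent $i$ and $\hat s\in\mathcal{S}_i$, $X^{t+1}_{i\hat s}=\dfrac{X^t_{i\hat s}\exp(\eta\,\langle e_{\hat s},A^{(ij)}e_{s_j}\rangle)}{\sum_{\bar s\in\mathcal{S}_i}X^t_{i\bar s}\exp(\eta\,\langle e_{\bar s},A^{(ij)}e_{s_j}\rangle)}$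 ($j\ne i$). *)

theory Defs
  imports "HOL-Probability.Probability"
begin

text \<open>Pure strategies of agent 1 / agent 2 are the elements of the finite types 'm / 'n.
  The payoff matrix is A :: real^'n^'m, with entry A $ s1 $ s2.\<close>

definition mixed_strategies :: "(real^'a::finite) set" where
  "mixed_strategies = {x. (\<forall>i. 0 \<le> x $ i) \<and> (\<Sum>i\<in>UNIV. x $ i) = 1}"

definition profiles :: "((real^'m::finite) \<times> (real^'n::finite)) set" where
  "profiles = mixed_strategies \<times> mixed_strategies"

definition rel_boundary :: "((real^'m::finite) \<times> (real^'n::finite)) set" where
  "rel_boundary = {(x1, x2) \<in> profiles. (\<exists>i. x1 $ i = 0) \<or> (\<exists>j. x2 $ j = 0)}"

definition nash_eq :: "real^'n::finite^'m::finite \<Rightarrow> (real^'m) \<times> (real^'n) \<Rightarrow> bool" where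
  "nash_eq A x \<longleftrightarrow> x \<in> profiles \<and>
     (\<forall>y1\<in>mixed_strategies. y1 \<bullet> (A *v snd x) \<le> fst x \<bullet> (A *v snd x)) \<and>
     (\<forall>y2\<in>mixed_strategies. y2 \<bullet> ((- transpose A) *v fst x) \<le> snd x \<bullet> ((- transpose A) *v fst x))"

definition unique_boundary_NE :: "real^'n::finite^'m::finite \<Rightarrow> bool" where
  "unique_boundary_NE A \<longleftrightarrow> (\<exists>xs. {x. nash_eq A x} = {xs} \<and> xs \<in> rel_boundary)"

definition mwu_step :: "real \<Rightarrow> real^'n::finite^'m::finite \<Rightarrow> (real^'m) \<times> (real^'n)
                         \<Rightarrow> 'm \<times> 'n \<Rightarrow> (real^'m) \<times> (real^'n)" where
  "mwu_step \<eta> A x s =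
     ((\<chi> i. fst x $ i * exp (\<eta> * (A $ i $ snd s)) /
             (\<Sum>k\<in>UNIV. fst x $ k * exp (\<eta> * (A $ k $ snd s)))),
      (\<chi> j. snd x $ j * exp (\<eta> * (- (A $ fst s $ j))) /
             (\<Sum>k\<in>UNIV. snd x $ k * exp (\<eta> * (- (A $ fst s $ k))))))"

fun traj :: "real \<Rightarrow> real^'n::finite^'m::finite \<Rightarrow> (real^'m) \<times> (real^'n)
              \<Rightarrow> (nat \<Rightarrow> 'm \<times> 'n) \<Rightarrow> nat \<Rightarrow> (real^'m) \<times> (real^'n)" where
  "traj \<eta> A x0 h 0 = x0"
| "traj \<eta> A x0 h (Suc t) = mwu_step \<eta> A (traj \<eta> A x0 h t) (h t)"

definition sample_prob :: "(real^'m::finite) \<times> (real^'n::finite) \<Rightarrow> 'm \<times> 'n \<Rightarrow> real" where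
  "sample_prob x s = fst x $ fst s * snd x $ snd s"

text \<open>The sampled pure-strategy pairs s t form the stochastic MWU process started at x0:
  their joint law is determined by all finite-history (cylinder) probabilities,
  in which at time t both agents sample independently from the current profile X^t.\<close>
definition smwu_process :: "'w measure \<Rightarrow> real \<Rightarrow> real^'n::finite^'m::finite
        \<Rightarrow> (real^'m) \<times> (real^'n) \<Rightarrow> (nat \<Rightarrow> 'w \<Rightarrow> 'm \<times> 'n) \<Rightarrow> bool" where
  "smwu_process M \<eta> A x0 s \<longleftrightarrow> prob_space M \<and>
     (\<forall>t. s t \<in> measurable M (count_space UNIV)) \<and>
     (\<forall>t h. measure M {\<omega> \<in> space M. \<forall>k\<le>t. s k \<omega> = h k}
              = (\<Prod>k\<le>t. sample_prob (traj \<eta> A x0 h k) (h k)))"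

end

theory Submission
  imports Defs
begin

text \<open>If the unique equilibrium lies on the relative boundary, one of the two players has an
  improving direction: a vector d with zero sum along which that player's payoff increases
  against every pure strategy of the opponent. Otherwise Gordan's alternative yields equalizing
  strategies for both players; these form an equilibrium, and strict complementarity together
  with uniqueness forces it to be fully mixed. Along the multiplicative-weights updates of that
  player the potential \<open>\<Sum>\<^sub>i d\<^sub>i ln X\<^sub>i\<close> grows at least linearly in time,
  whichever pure strategies are sampled, so the player's smallest probability decays
  exponentially and the profile approaches the relative boundary.\<close>

lemma sum_UNIV_Plus:
  "(\<Sum>k\<in>UNIV. f k) = (\<Sum>a\<in>UNIV. f (Inl a)) + (\<Sum>b\<in>UNIV. f (Inr b))"
  for f :: "'a::finite + 'b::finite \<Rightarrow> 'c::comm_monoid_add"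
  using sum.Plus[of UNIV UNIV f] by (simp only: UNIV_Plus_UNIV comp_def finite)

lemma matrix_vector_mult_uminus: "(- M) *v x = - (M *v (x :: real^'n::finite))"
  and vector_matrix_mult_uminus: "y v* (- M) = - (y v* M)"
  by (simp_all add: vec_eq_iff matrix_vector_mult_def vector_matrix_mult_def sum_negf)

lemma transpose_uminus: "transpose (- A) = - transpose (A :: real^'n::finite^'m::finite)"
  by (simp add: transpose_def vec_eq_iff)

lemma vec_Min_attained: "\<exists>i. Min (range (\<lambda>i. v$i)) = v$i"
  for v :: "'a::linorder^'k::finite"
proof -
  have "Min (range (\<lambda>i. v$i)) \<in> range (\<lambda>i. v$i)" by (rule Min_in) auto
  then show ?thesis by (metis rangeE)
qed

lemma convex_cone_hull_subset_nonneg_combinations: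
  fixes w :: "'k::finite \<Rightarrow> 'a::real_vector"
  shows "convex_cone hull (range w) \<subseteq> {(\<Sum>k\<in>UNIV. l k *\<^sub>R w k) | l. \<forall>k. 0 \<le> l k}"
    (is "_ \<subseteq> ?S")
proof (rule hull_minimal)
  show "range w \<subseteq> ?S"
  proof
    fix x assume "x \<in> range w"
    then obtain k0 where "x = w k0" by blast
    moreover have "(\<Sum>k\<in>UNIV. (if k = k0 then 1 else 0) *\<^sub>R w k) = w k0"
      by (simp add: if_distrib[of "\<lambda>c. c *\<^sub>R _"] cong: if_cong)
    ultimately show "x \<in> ?S" by (auto intro!: exI[of _ "\<lambda>k. if k = k0 then 1 else 0"])
  qed
  show "convex_cone ?S"
    unfolding convex_cone_iff
  proof (intro conjI ballI allI impI)
    show "0 \<in> ?S" by (auto intro!: exI[of _ "\<lambda>_. 0"])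
  next
    fix x y assume "x \<in> ?S" "y \<in> ?S"
    then obtain l1 l2 where "x = (\<Sum>k\<in>UNIV. l1 k *\<^sub>R w k)" "\<forall>k. 0 \<le> l1 k"
       "y = (\<Sum>k\<in>UNIV. l2 k *\<^sub>R w k)" "\<forall>k. 0 \<le> l2 k" by blast
    then show "x + y \<in> ?S"
      by (auto intro!: exI[of _ "\<lambda>k. l1 k + l2 k"] simp: scaleR_add_left sum.distrib)
  next
    fix x and c :: real assume "x \<in> ?S" "0 \<le> c"
    then obtain l where "x = (\<Sum>k\<in>UNIV. l k *\<^sub>R w k)" "\<forall>k. 0 \<le> l k" by blast
    then show "c *\<^sub>R x \<in> ?S" using \<open>0 \<le> c\<close>
      by (auto intro!: exI[of _ "\<lambda>k. c * l k"] simp: scaleR_sum_right)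
  qed
qed

lemma farkas_lemma:
  fixes w :: "'k::finite \<Rightarrow> 'a::euclidean_space"
  assumes "\<nexists>l. (\<forall>k. 0 \<le> l k) \<and> b = (\<Sum>k\<in>UNIV. l k *\<^sub>R w k)"
  shows "\<exists>z. (\<forall>k. 0 \<le> z \<bullet> w k) \<and> z \<bullet> b < 0"
proof -
  let ?C = "convex_cone hull (range w)"
  have "b \<notin> ?C" using assms convex_cone_hull_subset_nonneg_combinations by blast
  moreover have "closed ?C" by (rule closed_convex_cone_hull) simp
  ultimately obtain z \<beta> where z: "z \<bullet> b < \<beta>" "\<forall>x\<in>?C. \<beta> < z \<bullet> x"
    using separating_hyperplane_closed_point[OF convex_convex_cone_hull] by blast
  then have "\<beta> < z \<bullet> 0" using convex_cone_hull_contains_0 by blast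
  then have "\<beta> < 0" by simp
  have "0 \<le> z \<bullet> w k" for k
  proof (rule ccontr)
    assume neg: "\<not> 0 \<le> z \<bullet> w k"
    have "(\<beta> / (z \<bullet> w k)) *\<^sub>R w k \<in> ?C"
      using neg \<open>\<beta> < 0\<close> by (intro convex_cone_hull_mul hull_inc)
        (auto simp: divide_nonpos_neg less_imp_le)
    then have "\<beta> < z \<bullet> ((\<beta> / (z \<bullet> w k)) *\<^sub>R w k)" using z(2) by blast
    then show False using neg by simp
  qed
  then show ?thesis using z \<open>\<beta> < 0\<close> by (intro exI[of _ z]) auto
qed

lemma tendsto_zero_if_ln_le_linear:
  fixes m :: "nat \<Rightarrow> real"
  assumes "\<And>t. 0 < m t" and "\<And>t. ln (m t) \<le> a - b * real t" and "0 < b"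
  shows "m \<longlonglongrightarrow> 0"
proof (rule tendsto_sandwich[OF _ _ tendsto_const])
  have "m t \<le> exp (a - b * real t)" for t
    using assms(1,2) by (metis exp_le_cancel_iff exp_ln)
  also have "exp (a - b * real t) = exp a * exp (- b) ^ t" for t
    unfolding exp_of_nat_mult[symmetric] exp_add[symmetric] by simp
  finally show "\<forall>\<^sub>F t in sequentially. m t \<le> exp a * exp (- b) ^ t" by simp
  show "(\<lambda>t. exp a * exp (- b) ^ t) \<longlonglongrightarrow> 0"
    using \<open>0 < b\<close> by (intro tendsto_mult_right_zero LIMSEQ_power_zero) simp
qed (simp add: assms(1) less_imp_le)

lemma mixed_strategies_nonneg: "x \<in> mixed_strategies \<Longrightarrow> 0 \<le> x$i"
  and mixed_strategies_sum: "x \<in> mixed_strategies \<Longrightarrow> (\<Sum>i\<in>UNIV. x$i) = 1"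
  by (simp_all add: mixed_strategies_def)

lemma mixed_strategies_le_1:
  assumes "x \<in> mixed_strategies" shows "x$i \<le> 1"
proof -
  have "x$i \<le> (\<Sum>k\<in>UNIV. x$k)"
    using assms by (intro member_le_sum) (auto simp: mixed_strategies_nonneg)
  then show ?thesis using mixed_strategies_sum[OF assms] by simp
qed

lemma scaleR_mixed_strategies_obtain:
  fixes v :: "real^'k::finite"
  assumes nonneg: "\<forall>i. 0 \<le> v$i" and "v \<noteq> 0"
  obtains c where "0 < c" and "c *\<^sub>R v \<in> mixed_strategies"
proof
  obtain k where "v$k \<noteq> 0" using \<open>v \<noteq> 0\<close> by (auto simp: vec_eq_iff)
  then have "0 < (\<Sum>i\<in>UNIV. v$i)"
    using nonneg by (intro sum_pos2[of UNIV k]) (auto simp: order.strict_iff_order)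
  then show "0 < 1 / (\<Sum>i\<in>UNIV. v$i)" and "(1 / (\<Sum>i\<in>UNIV. v$i)) *\<^sub>R v \<in> mixed_strategies"
    using nonneg by (auto simp: mixed_strategies_def sum_divide_distrib[symmetric])
qed

lemma inner_mixed_strategy_le:
  assumes "y \<in> mixed_strategies" and "\<forall>i. w$i \<le> K"
  shows "y \<bullet> w \<le> K"
proof -
  have "y \<bullet> w = (\<Sum>i\<in>UNIV. y$i * w$i)" by (simp add: inner_vec_def)
  also have "\<dots> \<le> (\<Sum>i\<in>UNIV. y$i * K)"
    using assms by (intro sum_mono mult_left_mono) (auto simp: mixed_strategies_nonneg)
  also have "\<dots> = K" using assms by (simp add: sum_distrib_right[symmetric] mixed_strategies_sum)
  finally show ?thesis .
qed

lemma inner_mixed_strategy_ge: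
  assumes "y \<in> mixed_strategies" and "\<forall>i. K \<le> w$i"
  shows "K \<le> y \<bullet> w"
  using inner_mixed_strategy_le[OF assms(1), of "- w" "- K"] assms(2) by simp

lemma inner_mixed_strategy_const:
  assumes "y \<in> mixed_strategies" and "\<forall>i. w$i = K"
  shows "y \<bullet> w = K"
  using inner_mixed_strategy_le[OF assms(1)] inner_mixed_strategy_ge[OF assms(1)] assms(2)
  by (simp add: order.antisym)

text \<open>Writing \<open>d = \<mu> (w - u)\<close> with mixed strategies \<open>u\<close>, \<open>w\<close> and \<open>\<mu> > 0\<close>, this says that
  \<open>u\<close> is strictly dominated by \<open>w\<close> in the game with payoff matrix \<open>P\<close>.\<close>
definition improving_direction :: "real^'n::finite^'m::finite \<Rightarrow> real^'m \<Rightarrow> bool" where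
  "improving_direction P d \<longleftrightarrow> (\<Sum>i\<in>UNIV. d$i) = 0 \<and> (\<forall>j. 0 < (d v* P)$j)"

text \<open>Gordan's alternative, from Farkas' lemma with the generators \<open>(column j M, 1)\<close> and
  \<open>(\<plusminus>1, 0)\<close>.\<close>
lemma improving_direction_or_equalizer:
  fixes M :: "real^'n::finite^'m::finite"
  shows "(\<exists>d. improving_direction M d) \<or> (\<exists>y\<in>mixed_strategies. \<exists>\<beta>. \<forall>i. (M *v y)$i = \<beta>)"
proof -
  define w :: "'n + bool \<Rightarrow> (real^'m) \<times> real" where
    "w k = (case k of Inl j \<Rightarrow> (column j M, 1) | Inr b \<Rightarrow> (if b then 1 else -1, 0))" for k
  have sum_w: "(\<Sum>k\<in>UNIV. l k *\<^sub>R w k) =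
      (\<Sum>j\<in>UNIV. l (Inl j) *\<^sub>R (column j M, 1)) + (l (Inr True) - l (Inr False)) *\<^sub>R (1, 0)" for l
    by (simp add: sum_UNIV_Plus w_def UNIV_bool algebra_simps)
  show ?thesis
  proof (cases "\<exists>l. (\<forall>k. 0 \<le> l k) \<and> (0, 1) = (\<Sum>k\<in>UNIV. l k *\<^sub>R w k)")
    case True
    then obtain l where l: "\<forall>k. 0 \<le> l k" and eq: "(0, 1) = (\<Sum>k\<in>UNIV. l k *\<^sub>R w k)"
      by blast
    define y where "y = (\<chi> j. l (Inl j))"
    have "(\<Sum>j\<in>UNIV. y$j) = 1"
      using arg_cong[OF eq, of snd] by (simp add: sum_w snd_sum y_def)
    then have "y \<in> mixed_strategies" using l by (simp add: mixed_strategies_def y_def)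
    moreover have "(M *v y)$i = l (Inr False) - l (Inr True)" for i
      using arg_cong[OF eq, of "\<lambda>p. fst p $ i"]
      by (simp add: sum_w fst_sum sum_component y_def matrix_vector_mult_def column_def algebra_simps)
    ultimately show ?thesis by blast
  next
    case False
    from farkas_lemma[OF this] obtain c r where
      cr: "\<forall>k. 0 \<le> (c, r) \<bullet> w k" and "(c, r) \<bullet> (0, 1) < 0" by (metis surj_pair)
    then have "r < 0" by simp
    have "0 \<le> c \<bullet> 1" "0 \<le> - (c \<bullet> 1)"
      using cr[rule_format, of "Inr True"] cr[rule_format, of "Inr False"] by (simp_all add: w_def)
    then have "(\<Sum>i\<in>UNIV. c$i) = 0" by (simp add: inner_vec_def)
    moreover have "0 < (c v* M)$j" for j
      using cr[rule_format, of "Inl j"] \<open>r < 0\<close>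
      by (simp add: w_def inner_vec_def vector_matrix_mult_def column_def mult.commute)
    ultimately show ?thesis unfolding improving_direction_def by blast
  qed
qed

text \<open>Goldman--Tucker strict complementarity, from Farkas' lemma with the rows of \<open>B\<close> and the
  negated unit vectors as generators.\<close>
lemma strict_complementarity_zero:
  fixes B :: "real^'n::finite^'m::finite"
  shows "(\<exists>x\<in>mixed_strategies. 0 < x$i0 \<and> (\<forall>j. 0 \<le> (x v* B)$j))
       \<or> (\<exists>y\<in>mixed_strategies. (\<forall>i. (B *v y)$i \<le> 0) \<and> (B *v y)$i0 < 0)"
proof -
  define w :: "'m + 'n \<Rightarrow> real^'n" where
    "w k = (case k of Inl i \<Rightarrow> B$i | Inr j \<Rightarrow> - axis j 1)" for k
  show ?thesis
  proof (cases "\<exists>l. (\<forall>k. 0 \<le> l k) \<and> - B$i0 = (\<Sum>k\<in>UNIV. l k *\<^sub>R w k)")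
    case True
    then obtain l where l: "\<forall>k. 0 \<le> l k" and eq: "- B$i0 = (\<Sum>k\<in>UNIV. l k *\<^sub>R w k)"
      by blast
    define v where "v = (\<chi> i. l (Inl i) + (if i = i0 then 1 else 0))"
    have "\<forall>i. 0 \<le> v$i" "0 < v$i0" using l by (simp_all add: v_def add_nonneg_pos)
    then obtain c where "0 < c" "c *\<^sub>R v \<in> mixed_strategies"
      by (metis scaleR_mixed_strategies_obtain zero_index less_irrefl)
    moreover have "(v v* B)$j = l (Inr j)" for j
    proof -
      have "- B$i0$j = (\<Sum>i\<in>UNIV. l (Inl i) * B$i$j) - l (Inr j)"
        using arg_cong[OF eq, of "\<lambda>u. u$j"]
        by (simp add: sum_UNIV_Plus w_def sum_component axis_def sum_negf
            if_distrib[of "\<lambda>c. l _ * c"] cong: if_cong)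
      moreover have "(v v* B)$j = (\<Sum>i\<in>UNIV. l (Inl i) * B$i$j) + B$i0$j"
        by (simp add: v_def vector_matrix_mult_def distrib_left sum.distrib mult.commute
            if_distrib[of "\<lambda>c. _ * c"] cong: if_cong)
      ultimately show ?thesis by simp
    qed
    ultimately show ?thesis
      using \<open>0 < v$i0\<close> l by (intro disjI1 bexI[of _ "c *\<^sub>R v"]) (auto simp: scaleR_vector_matrix_assoc)
  next
    case False
    from farkas_lemma[OF this] obtain z where
      z: "\<forall>k. 0 \<le> z \<bullet> w k" and "z \<bullet> - B$i0 < 0" by blast
    define y0 where "y0 = - z"
    have "(B *v y0)$i = - (z \<bullet> B$i)" for i
      by (simp add: y0_def matrix_vector_mul_component inner_commute)
    then have By0_le: "(B *v y0)$i \<le> 0" and By0_lt: "(B *v y0)$i0 < 0" for i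
      using z[rule_format, of "Inl i"] \<open>z \<bullet> - B$i0 < 0\<close> by (simp_all add: w_def)
    have "\<forall>j. 0 \<le> y0$j"
      using z by (auto simp: y0_def w_def inner_axis dest: spec[of _ "Inr _"])
    moreover have "y0 \<noteq> 0" using By0_lt by auto
    ultimately obtain c where "0 < c" "c *\<^sub>R y0 \<in> mixed_strategies"
      by (rule scaleR_mixed_strategies_obtain)
    then show ?thesis using By0_le By0_lt
      by (intro disjI2 bexI[of _ "c *\<^sub>R y0"])
        (auto simp: matrix_vector_mult_scaleR mult_pos_neg mult_nonneg_nonpos less_imp_le)
  qed
qed

lemma strict_complementarity:
  fixes A :: "real^'n::finite^'m::finite"
  shows "(\<exists>x\<in>mixed_strategies. 0 < x$i0 \<and> (\<forall>j. \<beta> \<le> (x v* A)$j))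
       \<or> (\<exists>y\<in>mixed_strategies. (\<forall>i. (A *v y)$i \<le> \<beta>) \<and> (A *v y)$i0 < \<beta>)"
proof -
  define B where "B = (\<chi> i j. A$i$j - \<beta>)"
  have "(x v* B)$j = (x v* A)$j - \<beta>" if "x \<in> mixed_strategies" for x j
    using mixed_strategies_sum[OF that]
    by (simp add: B_def vector_matrix_mult_def right_diff_distrib sum_subtractf
        sum_distrib_left[symmetric] mult.commute)
  moreover have "(B *v y)$i = (A *v y)$i - \<beta>" if "y \<in> mixed_strategies" for y i
    using mixed_strategies_sum[OF that]
    by (simp add: B_def matrix_vector_mult_def left_diff_distrib sum_subtractf
        sum_distrib_left[symmetric])
  ultimately show ?thesis
    using strict_complementarity_zero[of i0 B] by fastforce
qed

lemma nash_eq_swap: "nash_eq (- transpose A) (y, x) \<longleftrightarrow> nash_eq A (x, y)"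
  by (auto simp: nash_eq_def profiles_def transpose_uminus matrix_vector_mult_uminus)

lemma nash_eqI:
  fixes A :: "real^'n::finite^'m::finite"
  assumes x: "x \<in> mixed_strategies" and y: "y \<in> mixed_strategies"
    and "\<forall>i. (A *v y)$i \<le> K" and "\<forall>j. K \<le> (x v* A)$j"
  shows "nash_eq A (x, y)"
proof -
  have "x \<bullet> (A *v y) \<le> K" "K \<le> y \<bullet> (x v* A)"
    using inner_mixed_strategy_le[OF x] inner_mixed_strategy_ge[OF y] assms by auto
  moreover have "x \<bullet> (A *v y) = y \<bullet> (x v* A)" by (simp add: dot_lmul_matrix[symmetric] inner_commute)
  ultimately have "x \<bullet> (A *v y) = K" "y \<bullet> (x v* A) = K" by linarith+
  then show ?thesis
    using x y assms inner_mixed_strategy_le[of _ "A *v y" K] inner_mixed_strategy_ge[of _ K "x v* A"]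
    by (simp add: nash_eq_def profiles_def matrix_vector_mult_uminus)
qed

text \<open>Because \<open>x\<close> and \<open>y\<close> are equalizers, \<open>(x', y)\<close> is an equilibrium whenever all
  entries of \<open>x' v* A\<close> are at least \<open>\<beta>\<close>, and \<open>(x, y')\<close> whenever all entries of
  \<open>A *v y'\<close> are at most \<open>\<beta>\<close>; so either alternative of strict complementarity yields a
  second equilibrium unless \<open>0 < x$i\<close>.\<close>
lemma equalizing_equilibrium_interior:
  fixes A :: "real^'n::finite^'m::finite"
  assumes x: "x \<in> mixed_strategies" and y: "y \<in> mixed_strategies"
    and Ay: "\<forall>i. (A *v y)$i = \<beta>" and xA: "\<forall>j. (x v* A)$j = \<beta>"
    and unique: "\<And>p. nash_eq A p \<Longrightarrow> p = (x, y)"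
  shows "0 < x$i"
  using strict_complementarity[of i \<beta> A]
proof
  assume "\<exists>x'\<in>mixed_strategies. 0 < x'$i \<and> (\<forall>j. \<beta> \<le> (x' v* A)$j)"
  then obtain x' where x': "x' \<in> mixed_strategies" "0 < x'$i" "\<forall>j. \<beta> \<le> (x' v* A)$j"
    by blast
  then have "nash_eq A (x', y)" using nash_eqI[OF x'(1) y, of A \<beta>] Ay by simp
  then have "(x', y) = (x, y)" by (rule unique)
  then show ?thesis using x'(2) by simp
next
  assume "\<exists>y'\<in>mixed_strategies. (\<forall>i. (A *v y')$i \<le> \<beta>) \<and> (A *v y')$i < \<beta>"
  then obtain y' where y': "y' \<in> mixed_strategies" "\<forall>i. (A *v y')$i \<le> \<beta>" "(A *v y')$i < \<beta>"
    by blast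
  then have "nash_eq A (x, y')" using nash_eqI[OF x y'(1), of A \<beta>] xA by simp
  then have "(x, y') = (x, y)" by (rule unique)
  then show ?thesis using y'(3) Ay by simp
qed

lemma unique_boundary_NE_improving_direction:
  fixes A :: "real^'n::finite^'m::finite"
  assumes "unique_boundary_NE A"
  shows "(\<exists>d. improving_direction A d) \<or> (\<exists>d. improving_direction (- transpose A) d)"
proof (rule ccontr)
  assume "\<not> ?thesis"
  then obtain x y \<alpha> \<beta> where x: "x \<in> mixed_strategies" and y: "y \<in> mixed_strategies"
    and Ay: "\<forall>i. (A *v y)$i = \<beta>" and "\<forall>j. ((- transpose A) *v x)$j = \<alpha>"
    using improving_direction_or_equalizer[of A] improving_direction_or_equalizer[of "- transpose A"]
    by blast
  then have xA: "\<forall>j. (x v* A)$j = - \<alpha>"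
    by (simp add: matrix_vector_mult_uminus) (metis minus_minus)
  have "- \<alpha> = \<beta>"
    using inner_mixed_strategy_const[OF x Ay] inner_mixed_strategy_const[OF y xA]
    by (simp add: dot_lmul_matrix[symmetric] inner_commute)
  then have "nash_eq A (x, y)" using nash_eqI[OF x y, of A \<beta>] Ay xA by simp
  moreover obtain xs where xs: "{p. nash_eq A p} = {xs}" "xs \<in> rel_boundary"
    using assms unfolding unique_boundary_NE_def by blast
  moreover have NE_iff: "nash_eq A p \<longleftrightarrow> p = xs" for p
    using xs(1) by (metis mem_Collect_eq singleton_iff)
  ultimately have unique: "p = (x, y)" if "nash_eq A p" for p
    using that by simp
  have x_pos: "0 < x$i" for i
    using equalizing_equilibrium_interior[OF x y Ay] xA \<open>- \<alpha> = \<beta>\<close> unique by simp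
  have y_pos: "0 < y$j" for j
  proof -
    have unique': "p = (y, x)" if "nash_eq (- transpose A) p" for p
      using that unique[of "(snd p, fst p)"] nash_eq_swap[of A "fst p" "snd p"] by auto
    have "\<forall>i. (y v* (- transpose A))$i = - \<beta>" "\<forall>j. ((- transpose A) *v x)$j = - \<beta>"
      using Ay xA \<open>- \<alpha> = \<beta>\<close> by (simp_all add: matrix_vector_mult_uminus vector_matrix_mult_uminus)
    then show ?thesis using equalizing_equilibrium_interior[OF y x _ _ unique'] by blast
  qed
  have "(x, y) \<notin> rel_boundary"
    using x_pos y_pos by (simp add: rel_boundary_def) (metis less_irrefl)
  moreover have "xs = (x, y)" using NE_iff unique by blast
  ultimately show False using xs(2) by simp
qed

definition mwu_update :: "real \<Rightarrow> real^'k::finite \<Rightarrow> real^'k \<Rightarrow> real^'k" where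
  "mwu_update \<eta> g p = (\<chi> i. p$i * exp (\<eta> * g$i) / (\<Sum>k\<in>UNIV. p$k * exp (\<eta> * g$k)))"

lemma mwu_normalizer_pos:
  assumes "p \<in> mixed_strategies"
  shows "0 < (\<Sum>k\<in>UNIV. p$k * exp (\<eta> * g$k))"
proof -
  obtain k where "0 < p$k"
    using mixed_strategies_sum[OF assms] sum_nonpos[of UNIV "\<lambda>k. p$k"] by (metis not_less zero_less_one)
  then show ?thesis
    by (intro sum_pos2[of UNIV k]) (auto simp: mixed_strategies_nonneg[OF assms])
qed

lemma mwu_update_mixed: "p \<in> mixed_strategies \<Longrightarrow> mwu_update \<eta> g p \<in> mixed_strategies"
  using mwu_normalizer_pos[of p \<eta> g]
  by (auto simp: mwu_update_def mixed_strategies_def sum_divide_distrib[symmetric])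

lemma mwu_update_pos: "p \<in> mixed_strategies \<Longrightarrow> 0 < p$i \<Longrightarrow> 0 < mwu_update \<eta> g p $ i"
  using mwu_normalizer_pos[of p \<eta> g] by (simp add: mwu_update_def)

lemma mwu_update_eq_0: "p$i = 0 \<Longrightarrow> mwu_update \<eta> g p $ i = 0"
  by (simp add: mwu_update_def)

text \<open>The normalizer of the update cancels from the potential because the weights sum to zero.\<close>
lemma mwu_potential_update:
  assumes p: "p \<in> mixed_strategies" and pos: "\<forall>i. 0 < p$i" and d: "(\<Sum>i\<in>UNIV. d$i) = 0"
  shows "(\<Sum>i\<in>UNIV. d$i * ln (mwu_update \<eta> g p $ i)) = (\<Sum>i\<in>UNIV. d$i * ln (p$i)) + \<eta> * (d \<bullet> g)"
proof -
  define Z where "Z = (\<Sum>k\<in>UNIV. p$k * exp (\<eta> * g$k))"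
  have "0 < Z" unfolding Z_def by (rule mwu_normalizer_pos[OF p])
  then have "ln (mwu_update \<eta> g p $ i) = ln (p$i) + \<eta> * g$i - ln Z" for i
    using pos[rule_format, of i] by (simp add: mwu_update_def Z_def[symmetric] ln_div ln_mult)
  then have "(\<Sum>i\<in>UNIV. d$i * ln (mwu_update \<eta> g p $ i))
      = (\<Sum>i\<in>UNIV. d$i * (ln (p$i) + \<eta> * g$i - ln Z))"
    by simp
  also have "\<dots> = (\<Sum>i\<in>UNIV. d$i * ln (p$i)) + \<eta> * (\<Sum>i\<in>UNIV. d$i * g$i) - (\<Sum>i\<in>UNIV. d$i) * ln Z"
    by (simp add: algebra_simps sum.distrib sum_subtractf sum_distrib_left sum_distrib_right)
  finally show ?thesis using d by (simp add: inner_vec_def)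
qed

lemma weighted_ln_le_Min:
  assumes p: "p \<in> mixed_strategies" and pos: "\<forall>i. 0 < p$i"
  shows "(\<Sum>i\<in>UNIV. d$i * ln (p$i)) \<le> - (\<Sum>i\<in>UNIV. \<bar>d$i\<bar>) * ln (Min (range (\<lambda>i. p$i)))"
proof -
  define m where "m = Min (range (\<lambda>i. p$i))"
  obtain k where "m = p$k" unfolding m_def using vec_Min_attained by blast
  then have "0 < m" "m \<le> 1" using pos mixed_strategies_le_1[OF p] by auto
  have "d$i * ln (p$i) \<le> - \<bar>d$i\<bar> * ln m" for i
  proof (cases "0 \<le> d$i")
    case True
    have "ln (p$i) \<le> 0" using pos mixed_strategies_le_1[OF p] by simp
    moreover have "ln m \<le> 0" using \<open>0 < m\<close> \<open>m \<le> 1\<close> by simp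
    ultimately have "d$i * ln (p$i) \<le> 0" "0 \<le> - (\<bar>d$i\<bar> * ln m)"
      using True by (simp_all add: mult_nonneg_nonpos)
    then show ?thesis by linarith
  next
    case False
    have "ln m \<le> ln (p$i)" using \<open>0 < m\<close> by (simp add: m_def)
    then show ?thesis using False by (simp add: mult_left_mono_neg)
  qed
  then have "(\<Sum>i\<in>UNIV. d$i * ln (p$i)) \<le> (\<Sum>i\<in>UNIV. - \<bar>d$i\<bar> * ln m)"
    by (intro sum_mono) auto
  then show ?thesis by (simp add: m_def sum_negf sum_distrib_right)
qed

lemma mwu_potential_growth:
  fixes p g :: "nat \<Rightarrow> real^'k::finite"
  assumes mixed: "\<And>t. p t \<in> mixed_strategies" and pos: "\<And>t i. 0 < p t $ i"
    and step: "\<And>t. p (Suc t) = mwu_update \<eta> (g t) (p t)"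
    and "0 \<le> \<eta>" and d: "(\<Sum>i\<in>UNIV. d$i) = 0" and gain: "\<And>t. \<delta> \<le> d \<bullet> g t"
  shows "(\<Sum>i\<in>UNIV. d$i * ln (p 0 $ i)) + \<eta> * \<delta> * real t \<le> (\<Sum>i\<in>UNIV. d$i * ln (p t $ i))"
proof (induction t)
  case (Suc t)
  have "\<eta> * \<delta> \<le> \<eta> * (d \<bullet> g t)" using gain \<open>0 \<le> \<eta>\<close> by (simp add: mult_left_mono)
  then show ?case
    using Suc mwu_potential_update[OF mixed _ d, of t \<eta> "g t"] pos
    by (simp add: step algebra_simps)
qed simp

lemma mwu_Min_tendsto_zero:
  fixes p g :: "nat \<Rightarrow> real^'k::finite"
  assumes p0: "p 0 \<in> mixed_strategies" and step: "\<And>t. p (Suc t) = mwu_update \<eta> (g t) (p t)"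
    and "0 < \<eta>" and d: "(\<Sum>i\<in>UNIV. d$i) = 0" and "0 < \<delta>" and gain: "\<And>t. \<delta> \<le> d \<bullet> g t"
  shows "(\<lambda>t. Min (range (\<lambda>i. p t $ i))) \<longlonglongrightarrow> 0"
proof -
  have mixed: "p t \<in> mixed_strategies" for t
    by (induction t) (simp_all add: p0 step mwu_update_mixed)
  show ?thesis
  proof (cases "\<exists>i. p 0 $ i = 0")
    case True
    then obtain i where "p 0 $ i = 0" by blast
    then have "p t $ i = 0" for t by (induction t) (simp_all add: step mwu_update_eq_0)
    moreover have "0 \<le> Min (range (\<lambda>i. p t $ i))" for t
      using vec_Min_attained[of "p t"] mixed_strategies_nonneg[OF mixed] by metis
    moreover have "Min (range (\<lambda>i. p t $ i)) \<le> p t $ i" for t by simp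
    ultimately have "(\<lambda>t. Min (range (\<lambda>i. p t $ i))) = (\<lambda>_. 0)"
      by (intro ext order.antisym) auto
    then show ?thesis by simp
  next
    case False
    have pos: "0 < p t $ i" for t i
    proof (induction t arbitrary: i)
      case 0
      show ?case using False mixed_strategies_nonneg[OF p0, of i] by (simp add: less_le)
    next
      case (Suc t)
      show ?case using Suc by (simp add: step mwu_update_pos mixed)
    qed
    define C where "C = (\<Sum>i\<in>UNIV. \<bar>d$i\<bar>)"
    have "d \<noteq> 0" using gain[of 0] \<open>0 < \<delta>\<close> by auto
    then obtain k where "d$k \<noteq> 0" by (auto simp: vec_eq_iff)
    then have "0 < C" unfolding C_def by (intro sum_pos2[of UNIV k]) auto
    show ?thesis
    proof (rule tendsto_zero_if_ln_le_linear)
      show "0 < Min (range (\<lambda>i. p t $ i))" for t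
        using vec_Min_attained[of "p t"] pos by metis
      show "0 < \<eta> * \<delta> / C" using \<open>0 < \<eta>\<close> \<open>0 < \<delta>\<close> \<open>0 < C\<close> by simp
      show "ln (Min (range (\<lambda>i. p t $ i))) \<le> - (\<Sum>i\<in>UNIV. d$i * ln (p 0 $ i)) / C - \<eta> * \<delta> / C * real t"
        for t
        using weighted_ln_le_Min[OF mixed, of t d] pos
          mwu_potential_growth[of p \<eta> g d \<delta> t, OF mixed pos step _ d gain] \<open>0 < \<eta>\<close> \<open>0 < C\<close>
        by (simp add: C_def field_simps)
    qed
  qed
qed

lemma mwu_improving_direction_Min_tendsto_zero:
  fixes P :: "real^'n::finite^'k::finite"
  assumes "improving_direction P d" and "0 < \<eta>" and "p 0 \<in> mixed_strategies"
    and "\<And>t. p (Suc t) = mwu_update \<eta> (column (j t) P) (p t)"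
  shows "(\<lambda>t. Min (range (\<lambda>i. p t $ i))) \<longlonglongrightarrow> 0"
proof -
  define \<delta> where "\<delta> = Min (range (\<lambda>j. (d v* P)$j))"
  have "0 < \<delta>"
    using vec_Min_attained[of "d v* P"] assms(1) by (auto simp: \<delta>_def improving_direction_def)
  moreover have "\<delta> \<le> d \<bullet> column j P" for j
    by (simp add: \<delta>_def inner_vec_def column_def vector_matrix_mult_def mult.commute)
  ultimately show ?thesis
    using assms(1) by (intro mwu_Min_tendsto_zero[OF assms(3,4,2)]) (auto simp: improving_direction_def)
qed

lemma mwu_step_eq:
  "mwu_step \<eta> A x s =
    (mwu_update \<eta> (column (snd s) A) (fst x), mwu_update \<eta> (column (fst s) (- transpose A)) (snd x))"
  by (simp add: mwu_step_def mwu_update_def column_def transpose_def)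

lemma traj_in_profiles: "x0 \<in> profiles \<Longrightarrow> traj \<eta> A x0 h t \<in> profiles"
  by (induction t) (auto simp: profiles_def mwu_step_eq mwu_update_mixed)

lemma mixed_strategy_move_mass:
  fixes x :: "real^'k::finite"
  assumes x: "x \<in> mixed_strategies" and "x$i < 1"
  shows "\<exists>x'\<in>mixed_strategies. x'$i = 0 \<and> dist x x' \<le> 2 * x$i"
proof -
  have "(\<Sum>j\<in>UNIV. x$j) = x$i + (\<Sum>j\<in>UNIV - {i}. x$j)" by (rule sum.remove) auto
  then have "(\<Sum>j\<in>UNIV - {i}. x$j) \<noteq> 0" using mixed_strategies_sum[OF x] \<open>x$i < 1\<close> by simp
  then have "UNIV - {i} \<noteq> {}" by (metis sum.empty)
  then obtain k where "k \<noteq> i" by blast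
  define x' where "x' = x - x$i *\<^sub>R (axis i 1 - axis k 1)"
  have x'_comp: "x'$j = (if j = i then 0 else if j = k then x$k + x$i else x$j)" for j
    using \<open>k \<noteq> i\<close> by (auto simp: x'_def axis_def)
  have "x' \<in> mixed_strategies"
  proof -
    have "(\<Sum>j\<in>UNIV. x'$j) = (\<Sum>j\<in>UNIV. x$j)"
      by (simp add: x'_def sum_subtractf sum_distrib_left right_diff_distrib axis_def
          if_distrib[of "\<lambda>c. _ * c"] cong: if_cong)
    then show ?thesis
      using x by (auto simp: mixed_strategies_def x'_comp add_nonneg_nonneg)
  qed
  moreover have "dist x x' \<le> 2 * x$i"
  proof -
    have "dist x x' = x$i * norm (axis i (1::real) - axis k 1)"
      using mixed_strategies_nonneg[OF x] by (simp add: x'_def dist_norm)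
    also have "\<dots> \<le> x$i * 2"
      using norm_triangle_ineq4[of "axis i (1::real)" "axis k 1"] mixed_strategies_nonneg[OF x]
      by (intro mult_left_mono) auto
    finally show ?thesis by simp
  qed
  moreover have "x'$i = 0" by (simp add: x'_comp)
  ultimately show ?thesis by blast
qed

lemma infdist_rel_boundary_le:
  assumes "(x1, x2) \<in> profiles"
  shows "x1$i < 1 \<Longrightarrow> infdist (x1, x2) rel_boundary \<le> 2 * x1$i"
    and "x2$j < 1 \<Longrightarrow> infdist (x1, x2) rel_boundary \<le> 2 * x2$j"
proof -
  have x1: "x1 \<in> mixed_strategies" and x2: "x2 \<in> mixed_strategies"
    using assms by (auto simp: profiles_def)
  show "infdist (x1, x2) rel_boundary \<le> 2 * x1$i" if lt: "x1$i < 1"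
  proof -
    obtain x' where "x' \<in> mixed_strategies" "x'$i = 0" "dist x1 x' \<le> 2 * x1$i"
      using mixed_strategy_move_mass[OF x1 lt] by blast
    then have "(x', x2) \<in> rel_boundary" "dist (x1, x2) (x', x2) \<le> 2 * x1$i"
      using x2 by (auto simp: rel_boundary_def profiles_def dist_Pair_Pair)
    then show ?thesis by (meson infdist_le order_trans)
  qed
  show "infdist (x1, x2) rel_boundary \<le> 2 * x2$j" if lt: "x2$j < 1"
  proof -
    obtain x' where "x' \<in> mixed_strategies" "x'$j = 0" "dist x2 x' \<le> 2 * x2$j"
      using mixed_strategy_move_mass[OF x2 lt] by blast
    then have "(x1, x') \<in> rel_boundary" "dist (x1, x2) (x1, x') \<le> 2 * x2$j"
      using x1 by (auto simp: rel_boundary_def profiles_def dist_Pair_Pair)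
    then show ?thesis by (meson infdist_le order_trans)
  qed
qed

lemma tendsto_infdist_rel_boundary:
  assumes profiles: "\<And>t. X t \<in> profiles"
    and "(\<lambda>t. Min (range (\<lambda>i. fst (X t) $ i))) \<longlonglongrightarrow> 0 \<or> (\<lambda>t. Min (range (\<lambda>j. snd (X t) $ j))) \<longlonglongrightarrow> 0"
  shows "(\<lambda>t. infdist (X t) rel_boundary) \<longlonglongrightarrow> 0"
proof -
  obtain b where b: "b \<longlonglongrightarrow> 0" and b_bound: "\<And>t. b t < 1 \<Longrightarrow> infdist (X t) rel_boundary \<le> 2 * b t"
    using assms(2)
  proof
    assume "(\<lambda>t. Min (range (\<lambda>i. fst (X t) $ i))) \<longlonglongrightarrow> 0"
    moreover have "infdist (X t) rel_boundary \<le> 2 * Min (range (\<lambda>i. fst (X t) $ i))"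
      if "Min (range (\<lambda>i. fst (X t) $ i)) < 1" for t
      using that vec_Min_attained[of "fst (X t)"] profiles[of t]
        infdist_rel_boundary_le(1)[of "fst (X t)" "snd (X t)"]
      by auto
    ultimately show thesis using that by blast
  next
    assume "(\<lambda>t. Min (range (\<lambda>j. snd (X t) $ j))) \<longlonglongrightarrow> 0"
    moreover have "infdist (X t) rel_boundary \<le> 2 * Min (range (\<lambda>j. snd (X t) $ j))"
      if "Min (range (\<lambda>j. snd (X t) $ j)) < 1" for t
      using that vec_Min_attained[of "snd (X t)"] profiles[of t]
        infdist_rel_boundary_le(2)[of "fst (X t)" "snd (X t)"]
      by auto
    ultimately show thesis using that by blast
  qed
  have "\<forall>\<^sub>F t in sequentially. infdist (X t) rel_boundary \<le> 2 * b t"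
    using order_tendstoD(2)[OF b zero_less_one] by eventually_elim (rule b_bound)
  from tendsto_sandwich[OF _ this tendsto_const tendsto_mult_right_zero[OF b]]
  show ?thesis by (simp add: infdist_nonneg)
qed

lemma mwu_traj_tendsto_rel_boundary:
  fixes A :: "real^'n::finite^'m::finite"
  assumes "unique_boundary_NE A" and "0 < \<eta>" and x0: "x0 \<in> profiles"
  shows "(\<lambda>t. infdist (traj \<eta> A x0 h t) rel_boundary) \<longlonglongrightarrow> 0"
proof (rule tendsto_infdist_rel_boundary)
  let ?X = "traj \<eta> A x0 h"
  show "?X t \<in> profiles" for t using traj_in_profiles[OF x0] .
  have start: "fst (?X 0) \<in> mixed_strategies" "snd (?X 0) \<in> mixed_strategies"
    using x0 by (auto simp: profiles_def)
  have step: "fst (?X (Suc t)) = mwu_update \<eta> (column (snd (h t)) A) (fst (?X t))"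
    "snd (?X (Suc t)) = mwu_update \<eta> (column (fst (h t)) (- transpose A)) (snd (?X t))" for t
    by (simp_all add: mwu_step_eq)
  from unique_boundary_NE_improving_direction[OF assms(1)]
  show "(\<lambda>t. Min (range (\<lambda>i. fst (?X t) $ i))) \<longlonglongrightarrow> 0
      \<or> (\<lambda>t. Min (range (\<lambda>j. snd (?X t) $ j))) \<longlonglongrightarrow> 0"
    using mwu_improving_direction_Min_tendsto_zero[OF _ assms(2) start(1) step(1)]
      mwu_improving_direction_Min_tendsto_zero[OF _ assms(2) start(2) step(2)]
    by blast
qed

theorem theorem3:
  shows "AE A in (lebesgue :: (real^'n::finite^'m::finite) measure).
    unique_boundary_NE A \<longrightarrow>
    (\<exists>\<eta>0>0. \<forall>\<eta>. 0 < \<eta> \<and> \<eta> < \<eta>0 \<longrightarrow>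
      (\<forall>x0 \<in> profiles. \<forall>(M :: 'w measure) s. smwu_process M \<eta> A x0 s \<longrightarrow>
         (AE \<omega> in M. ((\<lambda>t. infdist (traj \<eta> A x0 (\<lambda>k. s k \<omega>) t) rel_boundary) \<longlonglongrightarrow> 0))))"
  by (auto intro!: AE_I2 exI[of _ 1] mwu_traj_tendsto_rel_boundary)

end
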